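(* Let $n,k,s$ be positive integers with $2\le s\le\lfloor n/k\rfloor$, let $d=\lfloor n/s\rfloor$, and let $\alpha,\beta>0$. Let $F^*(\alpha,d\beta)$ denote the minimum, over all finite sequences of failures and repairs and all data collectors, of the min-cut separating the data collector from the source in the information flow graph of the FCRS with storage $\alpha$ and per-helper download $\beta$. Then $$F^*(\alpha,d\beta)=\begin{cases}kd\beta-\lfloor k/2\rfloor\lceil k/2\rceil\beta & \text{if } d\le\alpha/\beta,\\ k_1\alpha+(d-k_1)(k-k_1)\beta & \text{if } d+k-2k_1-1\le\alpha/\beta<\min\{d+k-2k_1+1,\ d\} \text{ for } k_1\in[\lceil k/2\rceil:k],\\ k\alpha & \text{if } \alpha/\beta<d-k-1.\end{cases}$$
   Context: Notation: $[a:b]=\{a,\dots,b\}$. FCRS: $n=ds+s_0$ servers ($s_0=n\bmod s$) in clusters $1,\dots,s$ of size $d$ and cluster $s+1$ of size $s_0$; server $j$ of cluster $i$ is $(i,j)$. Information flow graph: a source node; for every server and time $t\ge0$ an in-node and out-node joined by an edge of capacity $\alpha$; at $t=0$ the source connects to every in-node with infinite capacity. At the end of each time slot $t-1$ exactly one server $(r,\ell)$ fails; a repair cluster $i\in[s]$ with $i\ne r$ is chosen arbitrarily (cluster $s+1$ never serves as repair group), and there are edges of capacity $\beta$ from the time-$(t-1)$ out-nodes of all $d$ servers of cluster $i$ to the time-$t$ in-node of $(r,\ell)$; every other server has an infinite-capacity edge from its time-$(t-1)$ out-node to its time-$t$ in-node. A data collector at time $t$ is a node receiving infinite-capacity edges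 from the time-$t$ out-nodes of some $k$ distinct servers. *)

theory Defs
  imports Complex_Main "HOL-Library.Extended_Real"
begin

text \<open>Servers of the FCRS with n servers and s clusters: server (i,j) is server j of
  cluster i; clusters 1..s have size d = n div s, cluster s+1 has size n mod s.\<close>
definition servers :: "nat \<Rightarrow> nat \<Rightarrow> (nat \<times> nat) set" where
  "servers n s = {(i, j). (1 \<le> i \<and> i \<le> s \<and> 1 \<le> j \<and> j \<le> n div s)
                        \<or> (i = s + 1 \<and> 1 \<le> j \<and> j \<le> n mod s)}"

text \<open>A failure/repair sequence: entry t (0-based) is ((r,l), i): at the end of slot t
  server (r,l) fails and is repaired (at time t+1) from cluster i.\<close>
definition valid_seq :: "nat \<Rightarrow> nat \<Rightarrow> ((nat \<times> nat) \<times> nat) list \<Rightarrow> bool" where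
  "valid_seq n s fs = (\<forall>e \<in> set fs. fst e \<in> servers n s \<and> snd e \<in> {1..s}
                                      \<and> snd e \<noteq> fst (fst e))"

datatype node = Src | InN nat "nat \<times> nat" | OutN nat "nat \<times> nat" | DC

text \<open>Capacity of the edge u -> v in the information flow graph (0 = no edge);
  t0 is the time of the data collector and D its set of servers.\<close>
fun ifg_cap :: "nat \<Rightarrow> nat \<Rightarrow> real \<Rightarrow> real \<Rightarrow> ((nat \<times> nat) \<times> nat) list \<Rightarrow> nat
                 \<Rightarrow> (nat \<times> nat) set \<Rightarrow> node \<Rightarrow> node \<Rightarrow> ereal" where
  "ifg_cap n s a b fs t0 D Src (InN t x) =
     (if t = 0 \<and> x \<in> servers n s then \<infinity> else 0)"
| "ifg_cap n s a b fs t0 D (InN t x) (OutN t' x') =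
     (if t' = t \<and> x' = x \<and> x \<in> servers n s \<and> t \<le> length fs then ereal a else 0)"
| "ifg_cap n s a b fs t0 D (OutN t x) (InN t' y) =
     (if t' = Suc t \<and> t < length fs \<and> x \<in> servers n s \<and> y \<in> servers n s then
        (if y = fst (fs ! t) then (if fst x = snd (fs ! t) then ereal b else 0)
         else if x = y then \<infinity> else 0)
      else 0)"
| "ifg_cap n s a b fs t0 D (OutN t x) DC = (if t = t0 \<and> x \<in> D then \<infinity> else 0)"
| "ifg_cap n s a b fs t0 D _ _ = 0"

definition ifg_nodes :: "nat \<Rightarrow> nat \<Rightarrow> ((nat \<times> nat) \<times> nat) list \<Rightarrow> node set" where
  "ifg_nodes n s fs = {Src, DC} \<union> {InN t x | t x. t \<le> length fs \<and> x \<in> servers n s}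
                                 \<union> {OutN t x | t x. t \<le> length fs \<and> x \<in> servers n s}"

definition cut_value :: "(node \<Rightarrow> node \<Rightarrow> ereal) \<Rightarrow> node set \<Rightarrow> node set \<Rightarrow> ereal" where
  "cut_value c V S = (\<Sum>(u, v) \<in> S \<times> (V - S). c u v)"

definition min_cut :: "nat \<Rightarrow> nat \<Rightarrow> real \<Rightarrow> real \<Rightarrow> ((nat \<times> nat) \<times> nat) list \<Rightarrow> nat
                       \<Rightarrow> (nat \<times> nat) set \<Rightarrow> ereal" where
  "min_cut n s a b fs t0 D =
     (INF S \<in> {S. S \<subseteq> ifg_nodes n s fs \<and> Src \<in> S \<and> DC \<notin> S}.
        cut_value (ifg_cap n s a b fs t0 D) (ifg_nodes n s fs) S)"

definition Fstar :: "nat \<Rightarrow> nat \<Rightarrow> nat \<Rightarrow> real \<Rightarrow> real \<Rightarrow> ereal" where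
  "Fstar n k s a b =
     (INF (fs, t0, D) \<in> {(fs, t0, D). valid_seq n s fs \<and> t0 \<le> length fs
                                      \<and> D \<subseteq> servers n s \<and> card D = k}.
        min_cut n s a b fs t0 D)"

end

theory Submission
  imports Defs
begin

text \<open>In a cut of finite value, tracing every collector server back to its last
  repair gives k distinct events: storage nodes on the sink side whose incoming capacity is cut.
  An event either pays \<open>\<alpha>\<close> for its storage edge, or it was just repaired and pays \<open>\<beta>\<close> for every
  helper on the source side, i.e. \<open>\<beta>\<close> (d - #parents), where its parents are the earlier events
  of its helper cluster. The parent graph is triangle-free, since all parents of an event lie in a
  single cluster different from its own. Among the k earliest events let p pay \<open>\<alpha>\<close> and the other q
  carry H parents: Mantel's theorem gives 4 H \<le> k * k, and H \<le> p q when q \<le> p. Minimising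
  p \<open>\<alpha>\<close> + \<open>\<beta>\<close> (q d - H) under these constraints yields the three regimes.

  Upper bound. For the minimising p and q an explicit failure pattern has a cut of exactly this
  value.\<close>

section \<open>Arc counts in triangle-free digraphs\<close>

definition adjacent :: "('v \<Rightarrow> 'v set) \<Rightarrow> 'v \<Rightarrow> 'v \<Rightarrow> bool" where
  "adjacent Par u v \<longleftrightarrow> u \<in> Par v \<or> v \<in> Par u"

lemma in_degree_sum_remove:
  fixes Par :: "'v \<Rightarrow> 'v set"
  assumes "finite V" "R \<subseteq> Q" "Q \<subseteq> V"
  shows "(\<Sum>w\<in>Q. card (Par w \<inter> V)) =
           (\<Sum>w\<in>Q - R. card (Par w \<inter> (V - R)))
         + (\<Sum>r\<in>R. card (Par r \<inter> V) + card {w \<in> Q - R. r \<in> Par w})"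
proof -
  have finite_Q: "finite Q" using assms(1,3) by (rule rev_finite_subset)
  have finite_R: "finite R" using finite_Q assms(2) by (rule rev_finite_subset)
  have "card (Par w \<inter> V) = card (Par w \<inter> (V - R)) + card {r \<in> R. r \<in> Par w}" for w
  proof -
    have fin: "finite (Par w \<inter> (V - R))" "finite {r \<in> R. r \<in> Par w}"
      using assms(1) finite_R by auto
    have "Par w \<inter> V = (Par w \<inter> (V - R)) \<union> {r \<in> R. r \<in> Par w}" using assms by blast
    moreover have "(Par w \<inter> (V - R)) \<inter> {r \<in> R. r \<in> Par w} = {}" by blast
    ultimately show ?thesis using card_Un_disjoint[OF fin] by simp
  qed
  then have "(\<Sum>w\<in>Q - R. card (Par w \<inter> V))
      = (\<Sum>w\<in>Q - R. card (Par w \<inter> (V - R))) + (\<Sum>w\<in>Q - R. card {r \<in> R. r \<in> Par w})"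
    by (simp only: sum.distrib)
  also have "(\<Sum>w\<in>Q - R. card {r \<in> R. r \<in> Par w}) = (\<Sum>r\<in>R. card {w \<in> Q - R. r \<in> Par w})"
    by (rule sum_multicount_gen) (use finite_Q finite_R in auto)
  finally have "(\<Sum>w\<in>Q - R. card (Par w \<inter> V))
      = (\<Sum>w\<in>Q - R. card (Par w \<inter> (V - R))) + (\<Sum>r\<in>R. card {w \<in> Q - R. r \<in> Par w})" .
  moreover note sum.subset_diff[OF assms(2) finite_Q, of "\<lambda>w. card (Par w \<inter> V)"]
  ultimately show ?thesis by (simp only: sum.distrib add.assoc add.commute add.left_commute)
qed

locale triangle_free_digraph =
  fixes Par :: "'v \<Rightarrow> 'v set"
  assumes parent_asym: "u \<in> Par v \<Longrightarrow> v \<notin> Par u"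
    and no_triangle: "adjacent Par u v \<Longrightarrow> adjacent Par v w \<Longrightarrow> adjacent Par u w \<Longrightarrow> False"
begin

lemma edge_degree_sum_le:
  assumes "finite V" "a \<in> Par b" "b \<in> V"
  shows "card (Par a \<inter> V) + card (Par b \<inter> V)
         + card {w \<in> V - {a, b}. a \<in> Par w} + card {w \<in> V - {a, b}. b \<in> Par w} \<le> card V - 1"
proof -
  define Na where "Na = (Par a \<inter> V) \<union> {w \<in> V - {a, b}. a \<in> Par w}"
  define Nb where "Nb = (Par b \<inter> V) \<union> {w \<in> V - {a, b}. b \<in> Par w}"
  have finite_N: "finite Na" "finite Nb" using assms(1) by (auto simp: Na_def Nb_def)
  have "card Na = card (Par a \<inter> V) + card {w \<in> V - {a, b}. a \<in> Par w}"
    unfolding Na_def using assms(1) parent_asym by (intro card_Un_disjoint) auto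
  moreover have "card Nb = card (Par b \<inter> V) + card {w \<in> V - {a, b}. b \<in> Par w}"
    unfolding Nb_def using assms(1) parent_asym by (intro card_Un_disjoint) auto
  moreover have "card Na + card Nb \<le> card V - 1"
  proof -
    have "Na \<inter> Nb = {}"
      using no_triangle[of a b] assms(2) by (auto simp: Na_def Nb_def adjacent_def)
    then have "card Na + card Nb = card (Na \<union> Nb)"
      using finite_N by (simp add: card_Un_disjoint)
    also have "\<dots> \<le> card (V - {b})"
      using assms(1,2) parent_asym by (intro card_mono) (auto simp: Na_def Nb_def)
    finally show ?thesis using assms(3) by simp
  qed
  ultimately show ?thesis by linarith
qed

text \<open>Removing an arc-free vertex of Q loses at most its p arcs from V - Q; removing both ends of
  an arc loses at most |V| - 1 arcs, as their neighbourhoods are disjoint.\<close>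
lemma in_degree_sum_le:
  fixes f :: "nat \<Rightarrow> nat"
  assumes remove_one: "\<And>q. 1 \<le> q \<Longrightarrow> f (q - 1) + p \<le> f q"
    and remove_edge: "\<And>q. 2 \<le> q \<Longrightarrow> f (q - 2) + (p + q) - 1 \<le> f q"
    and "finite V" "Q \<subseteq> V" "card (V - Q) = p"
  shows "(\<Sum>w\<in>Q. card (Par w \<inter> V)) \<le> f (card Q)"
  using assms(3-)
proof (induction "card Q" arbitrary: V Q rule: less_induct)
  case less
  have finite_Q: "finite Q" using less.prems(1,2) by (rule rev_finite_subset)
  have removal: "(\<Sum>w\<in>Q. card (Par w \<inter> V))
      \<le> f (card Q - card R) + (\<Sum>r\<in>R. card (Par r \<inter> V) + card {w \<in> Q - R. r \<in> Par w})"
    if "R \<subseteq> Q" "R \<noteq> {}" for R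
  proof -
    have "finite R" using finite_Q \<open>R \<subseteq> Q\<close> by (rule rev_finite_subset)
    have "card (Q - R) < card Q"
      using that finite_Q by (intro psubset_card_mono) auto
    moreover have "(V - R) - (Q - R) = V - Q" using that(1) by blast
    ultimately have "(\<Sum>w\<in>Q - R. card (Par w \<inter> (V - R))) \<le> f (card (Q - R))"
      using less.prems by (intro less.hyps) auto
    then show ?thesis
      using in_degree_sum_remove[OF less.prems(1) that(1) less.prems(2)] \<open>finite R\<close> that(1)
      by (simp add: card_Diff_subset)
  qed
  show ?case
  proof (cases "\<exists>a\<in>Q. \<exists>b\<in>Q. a \<in> Par b")
    case True
    then obtain a b where ab: "a \<in> Q" "b \<in> Q" "a \<in> Par b" by blast
    have "a \<noteq> b" using ab(3) parent_asym by blast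
    then have two: "card {a, b} = 2" "2 \<le> card Q"
      using ab finite_Q by (auto dest: card_mono[of Q "{a, b}"])
    have children: "card {w \<in> Q - {a, b}. r \<in> Par w} \<le> card {w \<in> V - {a, b}. r \<in> Par w}" for r
      using less.prems(1,2) by (intro card_mono) auto
    have "card V = p + card Q"
      using less.prems card_Diff_subset[OF finite_Q less.prems(2)] card_mono[OF less.prems(1,2)]
        by simp
    then have "(\<Sum>r\<in>{a, b}. card (Par r \<inter> V) + card {w \<in> Q - {a, b}. r \<in> Par w}) \<le> p + card Q - 1"
      using edge_degree_sum_le[OF less.prems(1) ab(3)] ab(2) less.prems(2) \<open>a \<noteq> b\<close>
        children[of a] children[of b] by auto
    moreover have "(\<Sum>w\<in>Q. card (Par w \<inter> V))
        \<le> f (card Q - 2) + (\<Sum>r\<in>{a, b}. card (Par r \<inter> V) + card {w \<in> Q - {a, b}. r \<in> Par w})"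
      using removal[of "{a, b}"] ab(1,2) two(1) by simp
    ultimately show ?thesis using remove_edge[OF two(2)] two(2) by linarith
  next
    case no_arc: False
    show ?thesis
    proof (cases "Q = {}")
      case False
      then obtain v where "v \<in> Q" by blast
      have "Par v \<inter> V \<subseteq> V - Q" using no_arc \<open>v \<in> Q\<close> by blast
      then have "card (Par v \<inter> V) \<le> p" using less.prems(1,3) card_mono[of "V - Q"] by blast
      moreover have "{w \<in> Q - {v}. v \<in> Par w} = {}" using no_arc \<open>v \<in> Q\<close> by blast
      then have "card {w \<in> Q - {v}. v \<in> Par w} = 0" by (simp only: card.empty)
      moreover have "(\<Sum>w\<in>Q. card (Par w \<inter> V))
          \<le> f (card Q - 1) + (card (Par v \<inter> V) + card {w \<in> Q - {v}. v \<in> Par w})"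
        using removal[of "{v}"] \<open>v \<in> Q\<close> by simp
      moreover have "1 \<le> card Q" using \<open>v \<in> Q\<close> finite_Q card_0_eq by fastforce
      ultimately show ?thesis using remove_one[of "card Q"] by linarith
    qed simp
  qed
qed

corollary in_degree_sum_le_Mantel:
  assumes "finite V"
  shows "(\<Sum>w\<in>V. card (Par w \<inter> V)) \<le> card V * card V div 4"
proof (rule in_degree_sum_le[where p = 0])
  fix q :: nat
  have "(q - 1) * (q - 1) \<le> q * q" by (intro mult_le_mono) auto
  then show "(q - 1) * (q - 1) div 4 + 0 \<le> q * q div 4" by (simp add: div_le_mono)
next
  fix q :: nat assume "2 \<le> q"
  then obtain m where q: "q = m + 2" by (metis le_add_diff_inverse2)
  have "(m + 2) * (m + 2) = m * m + (m + 1) * 4" by (simp add: algebra_simps)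
  then show "(q - 2) * (q - 2) div 4 + (0 + q) - 1 \<le> q * q div 4" using q by simp
qed (use assms in auto)

corollary in_degree_sum_le_mult:
  assumes "finite V" "Q \<subseteq> V" "card Q \<le> card (V - Q)"
  shows "(\<Sum>w\<in>Q. card (Par w \<inter> V)) \<le> card (V - Q) * card Q"
proof -
  define p where "p = card (V - Q)"
  \<comment> \<open>equal to p q for q \<le> p + 1; beyond that it only has to satisfy the recurrences\<close>
  define f where "f q = (if q \<le> p + 1 then p * q else p * q + q * q)" for q
  have "(\<Sum>w\<in>Q. card (Par w \<inter> V)) \<le> f (card Q)"
  proof (rule in_degree_sum_le[where p = p])
    fix q :: nat assume "1 \<le> q"
    then show "f (q - 1) + p \<le> f q" by (cases q) (auto simp: f_def algebra_simps)
  next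
    fix q :: nat assume "2 \<le> q"
    then obtain m where q: "q = m + 2" by (metis le_add_diff_inverse2)
    then show "f (q - 2) + (p + q) - 1 \<le> f q" by (auto simp: f_def algebra_simps)
  qed (use assms p_def in auto)
  then show ?thesis using assms(3) by (simp add: f_def p_def)
qed

lemma closed_in_degree_sum_bounds:
  assumes "finite K" "\<And>e. e \<in> K \<Longrightarrow> Par e \<subseteq> K" "P \<subseteq> K"
  shows "4 * (\<Sum>e\<in>K - P. card (Par e)) \<le> card K * card K"
    and "card (K - P) \<le> card P \<Longrightarrow> (\<Sum>e\<in>K - P. card (Par e)) \<le> card P * card (K - P)"
proof -
  have in_K: "Par e \<inter> K = Par e" if "e \<in> K" for e using assms(2) that by blast
  have "(\<Sum>e\<in>K - P. card (Par e)) \<le> (\<Sum>e\<in>K. card (Par e \<inter> K))"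
    using assms(1) in_K by (simp add: sum_mono2)
  also have "\<dots> \<le> card K * card K div 4" using assms(1) by (rule in_degree_sum_le_Mantel)
  finally show "4 * (\<Sum>e\<in>K - P. card (Par e)) \<le> card K * card K" by linarith
  assume "card (K - P) \<le> card P"
  moreover have "K - (K - P) = P" using assms(3) by blast
  ultimately have "(\<Sum>e\<in>K - P. card (Par e \<inter> K)) \<le> card P * card (K - P)"
    using in_degree_sum_le_mult[OF assms(1) Diff_subset, of P] by simp
  then show "(\<Sum>e\<in>K - P. card (Par e)) \<le> card P * card (K - P)" using in_K by simp
qed

end

section \<open>The events of a cut\<close>

lemma exists_downward_closed_subset:
  fixes \<tau> :: "'a \<Rightarrow> nat"
  assumes "finite E" "k \<le> card E"
  shows "\<exists>K\<subseteq>E. card K = k \<and> (\<forall>e\<in>K. \<forall>e'\<in>E. \<tau> e' < \<tau> e \<longrightarrow> e' \<in> K)"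
  using assms(2)
proof (induction k)
  case (Suc k)
  then obtain K where K: "K \<subseteq> E" "card K = k" and closed: "\<forall>e\<in>K. \<forall>e'\<in>E. \<tau> e' < \<tau> e \<longrightarrow> e' \<in> K"
    by auto
  have "finite K" using assms(1) K(1) by (rule rev_finite_subset)
  have "E - K \<noteq> {}" using K Suc.prems by auto
  then obtain e where e: "e \<in> E - K" "\<tau> e = Min (\<tau> ` (E - K))"
    using Min_in[of "\<tau> ` (E - K)"] assms(1) by fastforce
  have "\<tau> e \<le> \<tau> e'" if "e' \<in> E - K" for e'
    using e(2) assms(1) that by simp
  then show ?case
    using K closed e(1) \<open>finite K\<close>
      by (intro exI[of _ "insert e K"]) (auto simp: not_less[symmetric])
qed auto

text \<open>p collector events pay \<open>\<alpha>\<close>, the other q pay \<open>\<beta>\<close> per helper outside their H parents.\<close>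
definition admissible_split :: "nat \<Rightarrow> nat \<Rightarrow> nat \<Rightarrow> nat \<Rightarrow> bool" where
  "admissible_split k p q H \<longleftrightarrow> p + q = k \<and> 4 * H \<le> k * k \<and> (q \<le> p \<longrightarrow> H \<le> p * q)"

definition split_value :: "real \<Rightarrow> real \<Rightarrow> nat \<Rightarrow> nat \<Rightarrow> nat \<Rightarrow> nat \<Rightarrow> real" where
  "split_value \<alpha> \<beta> d p q H = real p * \<alpha> + \<beta> * (real q * real d - real H)"

text \<open>A cut S of finite value, seen through out_sink t x = (OutN t x \<notin> S) and
  in_sink t x = (InN t x \<notin> S); the last three assumptions say that no edge of infinite capacity
  leaves S. Here failed t is the server failing in slot t and helper t its repair cluster.\<close>
locale cut_trace =
  fixes X :: "(nat \<times> nat) set" and d L t0 :: nat and D :: "(nat \<times> nat) set"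
    and failed :: "nat \<Rightarrow> nat \<times> nat" and helper :: "nat \<Rightarrow> nat"
    and out_sink in_sink :: "nat \<Rightarrow> nat \<times> nat \<Rightarrow> bool"
  assumes finite_X: "finite X"
    and helper_other_cluster: "t < L \<Longrightarrow> helper t \<noteq> fst (failed t)"
    and card_helper_cluster: "t < L \<Longrightarrow> card {z \<in> X. fst z = helper t} = d"
    and collector_subset: "D \<subseteq> X" and t0_le: "t0 \<le> L"
    and collector_sink: "x \<in> D \<Longrightarrow> out_sink t0 x"
    and initial_source: "x \<in> X \<Longrightarrow> \<not> in_sink 0 x"
    and survivor_sink: "t < L \<Longrightarrow> x \<in> X \<Longrightarrow> x \<noteq> failed t \<Longrightarrow> in_sink (Suc t) x \<Longrightarrow> out_sink t x"
begin

definition event :: "nat \<Rightarrow> nat \<times> nat \<Rightarrow> bool" where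
  "event t x \<longleftrightarrow> t \<le> L \<and> x \<in> X \<and> out_sink t x \<and> (\<not> in_sink t x \<or> (0 < t \<and> x = failed (t - 1)))"

definition events :: "(nat \<times> (nat \<times> nat)) set" where
  "events = {(t, x). event t x}"

fun latest_event :: "nat \<Rightarrow> nat \<times> nat \<Rightarrow> nat" where
  "latest_event 0 x = 0"
| "latest_event (Suc t) x = (if event (Suc t) x then Suc t else latest_event t x)"

lemma latest_event:
  "t \<le> L \<Longrightarrow> x \<in> X \<Longrightarrow> out_sink t x \<Longrightarrow> event (latest_event t x) x \<and> latest_event t x \<le> t"
proof (induction t)
  case 0
  then show ?case using initial_source by (simp add: event_def)
next
  case (Suc t)
  show ?case
  proof (cases "event (Suc t) x")
    case False
    then have "out_sink t x" using Suc.prems survivor_sink by (auto simp: event_def)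
    then show ?thesis using Suc False by simp
  qed simp
qed

lemma finite_events: "finite events"
  by (rule finite_subset[of _ "{..L} \<times> X"]) (auto simp: events_def event_def finite_X)

lemma card_collector_le_events: "card D \<le> card events"
proof -
  have "(\<lambda>x. (latest_event t0 x, x)) ` D \<subseteq> events"
    using latest_event t0_le collector_subset collector_sink by (auto simp: events_def)
  moreover have "inj_on (\<lambda>x. (latest_event t0 x, x)) D" by (auto intro: inj_onI)
  ultimately show ?thesis using finite_events by (metis card_image card_mono)
qed

definition parents :: "nat \<times> (nat \<times> nat) \<Rightarrow> (nat \<times> (nat \<times> nat)) set" where
  "parents e = (if event (fst e) (snd e) \<and> in_sink (fst e) (snd e)
     then (\<lambda>z. (latest_event (fst e - 1) z, z)) `
            {z \<in> X. fst z = helper (fst e - 1) \<and> out_sink (fst e - 1) z}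
     else {})"

lemma parents_props:
  assumes "u \<in> parents e"
  shows "u \<in> events" "fst u < fst e"
    and "fst (snd u) = helper (fst e - 1)" "fst (snd e) \<noteq> helper (fst e - 1)"
proof -
  obtain t x where e: "e = (t, x)" by (cases e)
  have "event t x" "in_sink t x" using assms e by (auto simp: parents_def split: if_splits)
  then have t: "0 < t" "t \<le> L" and "x = failed (t - 1)" by (auto simp: event_def)
  obtain z where u: "u = (latest_event (t - 1) z, z)"
    and z: "z \<in> X" "fst z = helper (t - 1)" "out_sink (t - 1) z"
    using assms e \<open>event t x\<close> \<open>in_sink t x\<close> by (auto simp: parents_def)
  have "event (latest_event (t - 1) z) z \<and> latest_event (t - 1) z \<le> t - 1"
    using latest_event[of "t - 1" z] t z by auto
  then show "u \<in> events" "fst u < fst e" using u e t by (auto simp: events_def)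
  show "fst (snd u) = helper (fst e - 1)" using u z e by simp
  show "fst (snd e) \<noteq> helper (fst e - 1)"
    using helper_other_cluster[of "t - 1"] t \<open>x = failed (t - 1)\<close> e by force
qed

lemma card_parents:
  "event t x \<Longrightarrow> in_sink t x \<Longrightarrow>
     card (parents (t, x)) = card {z \<in> X. fst z = helper (t - 1) \<and> out_sink (t - 1) z}"
  unfolding parents_def by (auto intro!: card_image inj_onI)

sublocale triangle_free_digraph parents
proof
  show "u \<in> parents v \<Longrightarrow> v \<notin> parents u" for u v
    using parents_props(2) by (meson less_asym)
  have no_cycle: False if "a \<in> parents b" "b \<in> parents c" "c \<in> parents a" for a b c
    using that parents_props(2) by (meson less_asym less_trans)
  have no_transitive: False if "u \<in> parents v" "u \<in> parents w" "v \<in> parents w" for u v w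
    using that parents_props(3,4) by metis
  show False if "adjacent parents u v" "adjacent parents v w" "adjacent parents u w" for u v w
    using that no_cycle no_transitive unfolding adjacent_def by metis
qed

definition event_cost :: "real \<Rightarrow> real \<Rightarrow> nat \<times> (nat \<times> nat) \<Rightarrow> real" where
  "event_cost \<alpha> \<beta> e = (if in_sink (fst e) (snd e)
     then \<beta> * real (card {z \<in> X. fst z = helper (fst e - 1) \<and> \<not> out_sink (fst e - 1) z})
     else \<alpha>)"

lemma event_cost_ge_min:
  assumes "e \<in> events"
  shows "min \<alpha> (\<beta> * (real d - real (card (parents e)))) \<le> event_cost \<alpha> \<beta> e"
proof (cases "in_sink (fst e) (snd e)")
  case True
  obtain t x where e: "e = (t, x)" by (cases e)
  have ev: "event t x" "in_sink t x" using assms True e by (auto simp: events_def)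
  then have "t - 1 < L" by (auto simp: event_def)
  let ?A = "{z \<in> X. fst z = helper (t - 1) \<and> out_sink (t - 1) z}"
  let ?B = "{z \<in> X. fst z = helper (t - 1) \<and> \<not> out_sink (t - 1) z}"
  have "card ?A + card ?B = card (?A \<union> ?B)" using finite_X
    by (intro card_Un_disjoint[symmetric]) auto
  also have "?A \<union> ?B = {z \<in> X. fst z = helper (t - 1)}" by auto
  finally have "real (card ?B) = real d - real (card (parents e))"
    using card_helper_cluster[OF \<open>t - 1 < L\<close>] card_parents[OF ev] e by simp
  then show ?thesis using ev e by (simp add: event_cost_def)
qed (simp add: event_cost_def)

lemma event_cost_nonneg: "0 < \<alpha> \<Longrightarrow> 0 < \<beta> \<Longrightarrow> 0 \<le> event_cost \<alpha> \<beta> e"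
  by (simp add: event_cost_def)

theorem exists_admissible_split_le_event_costs:
  assumes "0 < \<alpha>" "0 < \<beta>"
  shows "\<exists>p q H. admissible_split (card D) p q H
           \<and> split_value \<alpha> \<beta> d p q H \<le> (\<Sum>e\<in>events. event_cost \<alpha> \<beta> e)"
proof -
  obtain K where K: "K \<subseteq> events" "card K = card D"
    and closed: "\<forall>e\<in>K. \<forall>e'\<in>events. fst e' < fst e \<longrightarrow> e' \<in> K"
    using exists_downward_closed_subset[OF finite_events card_collector_le_events] by blast
  have finite_K: "finite K" using finite_events K(1) by (rule rev_finite_subset)
  have parents_in_K: "parents e \<subseteq> K" if "e \<in> K" for e
    using closed parents_props(1,2) that by blast
  define P where "P = {e \<in> K. \<alpha> < \<beta> * (real d - real (card (parents e)))}"
  define H where "H = (\<Sum>e\<in>K - P. card (parents e))"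
  have P_K: "P \<subseteq> K" by (auto simp: P_def)
  have "finite P" using finite_K P_K by (rule rev_finite_subset)
  then have "card P + card (K - P) = card D"
    using K(2) P_K card_mono[OF finite_K P_K] by (simp add: card_Diff_subset)
  then have "admissible_split (card D) (card P) (card (K - P)) H"
    using closed_in_degree_sum_bounds[OF finite_K parents_in_K P_K] K(2)
    unfolding admissible_split_def H_def by auto
  have "split_value \<alpha> \<beta> d (card P) (card (K - P)) H
      = (\<Sum>e\<in>P. \<alpha>) + (\<Sum>e\<in>K - P. \<beta> * (real d - real (card (parents e))))"
    by (simp add: split_value_def H_def sum_subtractf sum_distrib_left[symmetric] of_nat_sum)
  also have "\<dots> = (\<Sum>e\<in>K. min \<alpha> (\<beta> * (real d - real (card (parents e)))))"
    unfolding sum.subset_diff[OF P_K finite_K] by (auto simp: P_def intro!: sum.cong)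
  also have "\<dots> \<le> (\<Sum>e\<in>K. event_cost \<alpha> \<beta> e)"
    using K(1) event_cost_ge_min by (intro sum_mono) blast
  also have "\<dots> \<le> (\<Sum>e\<in>events. event_cost \<alpha> \<beta> e)"
    using K(1) finite_events event_cost_nonneg[OF assms] by (intro sum_mono2) auto
  finally show ?thesis using \<open>admissible_split (card D) (card P) (card (K - P)) H\<close> by blast
qed

end

section \<open>Lower bound on cuts of the information flow graph\<close>

lemma finite_servers: "finite (servers n s)"
proof (rule finite_subset[of _ "{0..s+1} \<times> {0..n}"])
  have "j \<le> n" if "j \<le> n div s \<or> j \<le> n mod s" for j
    using that div_le_dividend mod_less_eq_dividend le_trans by blast
  then show "servers n s \<subseteq> {0..s+1} \<times> {0..n}" by (auto simp: servers_def)
qed simp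

lemma card_cluster: "1 \<le> i \<Longrightarrow> i \<le> s \<Longrightarrow> card {z \<in> servers n s. fst z = i} = n div s"
proof -
  assume "1 \<le> i" "i \<le> s"
  then have "{z \<in> servers n s. fst z = i} = Pair i ` {1..n div s}" by (auto simp: servers_def)
  then show ?thesis by (simp add: card_image inj_on_def)
qed

lemma finite_ifg_nodes: "finite (ifg_nodes n s fs)"
proof -
  have "ifg_nodes n s fs = {Src, DC} \<union> case_prod InN ` ({..length fs} \<times> servers n s)
                                   \<union> case_prod OutN ` ({..length fs} \<times> servers n s)"
    by (auto simp: ifg_nodes_def)
  then show ?thesis using finite_servers by simp
qed

lemma ifg_nodes_simps [simp]:
  "Src \<in> ifg_nodes n s fs" "DC \<in> ifg_nodes n s fs"
  "InN t x \<in> ifg_nodes n s fs \<longleftrightarrow> t \<le> length fs \<and> x \<in> servers n s"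
  "OutN t x \<in> ifg_nodes n s fs \<longleftrightarrow> t \<le> length fs \<and> x \<in> servers n s"
  unfolding ifg_nodes_def by blast+

lemma ifg_cap_nonneg: "0 < a \<Longrightarrow> 0 < b \<Longrightarrow> 0 \<le> ifg_cap n s a b fs t0 D u v"
  by (cases u; cases v) auto

lemma cut_value_eq_sum_inflow: "cut_value c V S = (\<Sum>v\<in>V - S. \<Sum>u\<in>S. c u v)"
  unfolding cut_value_def by (simp add: sum.cartesian_product[symmetric] sum.swap[of _ S])

lemma inflow_OutN:
  "finite S \<Longrightarrow> t \<le> length fs \<Longrightarrow> x \<in> servers n s \<Longrightarrow>
     (\<Sum>u\<in>S. ifg_cap n s a b fs t0 D u (OutN t x)) = (if InN t x \<in> S then ereal a else 0)"
proof -
  assume "finite S" "t \<le> length fs" "x \<in> servers n s"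
  then have "ifg_cap n s a b fs t0 D u (OutN t x) = (if u = InN t x then ereal a else 0)" for u
    by (cases u) auto
  then show ?thesis using \<open>finite S\<close> by (simp add: sum.delta)
qed

lemma inflow_repaired:
  assumes "finite S" "t < length fs" "fst (fs ! t) \<in> servers n s"
  shows "(\<Sum>u\<in>S. ifg_cap n s a b fs t0 D u (InN (Suc t) (fst (fs ! t)))) =
     ereal (b * real (card {z \<in> servers n s. fst z = snd (fs ! t) \<and> OutN t z \<in> S}))"
proof -
  let ?H = "{z \<in> servers n s. fst z = snd (fs ! t) \<and> OutN t z \<in> S}"
  have "ifg_cap n s a b fs t0 D u (InN (Suc t) (fst (fs ! t))) =
          (if u \<in> OutN t ` {z \<in> servers n s. fst z = snd (fs ! t)} then ereal b else 0)" for u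
    using assms(2,3) by (cases u) auto
  then have "(\<Sum>u\<in>S. ifg_cap n s a b fs t0 D u (InN (Suc t) (fst (fs ! t))))
      = (\<Sum>u\<in>S. if u \<in> OutN t ` {z \<in> servers n s. fst z = snd (fs ! t)} then ereal b else 0)"
    by simp
  also have "\<dots> = (\<Sum>u\<in>S \<inter> OutN t ` {z \<in> servers n s. fst z = snd (fs ! t)}. ereal b)"
    by (rule sum.inter_restrict[OF assms(1), symmetric])
  also have "S \<inter> OutN t ` {z \<in> servers n s. fst z = snd (fs ! t)} = OutN t ` ?H" by auto
  also have "(\<Sum>u\<in>OutN t ` ?H. ereal b) = ereal (b * real (card ?H))"
    by (simp add: card_image inj_on_def mult.commute)
  finally show ?thesis .
qed

lemma ifg_cap_survivor:
  "t < length fs \<Longrightarrow> x \<in> servers n s \<Longrightarrow> x \<noteq> fst (fs ! t) \<Longrightarrow>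
     ifg_cap n s a b fs t0 D u (InN (Suc t) x) = (if u = OutN t x then \<infinity> else 0)"
  by (cases u) auto

lemma ifg_cap_DC: "ifg_cap n s a b fs t0 D u DC = (if u \<in> (\<lambda>x. OutN t0 x) ` D then \<infinity> else 0)"
  by (cases u) auto

locale finite_cut =
  fixes n s :: nat and a b :: real and fs :: "((nat \<times> nat) \<times> nat) list"
    and t0 :: nat and D :: "(nat \<times> nat) set" and S :: "node set"
  assumes a_pos: "0 < a" and b_pos: "0 < b"
    and valid: "valid_seq n s fs" and t0_le_length: "t0 \<le> length fs"
    and collector_servers: "D \<subseteq> servers n s" and S_nodes: "S \<subseteq> ifg_nodes n s fs"
    and Src_in: "Src \<in> S" and DC_notin: "DC \<notin> S"
    and finite_crossing: "\<And>u v. u \<in> S \<Longrightarrow> v \<in> ifg_nodes n s fs \<Longrightarrow> v \<notin> S \<Longrightarrow>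
                             ifg_cap n s a b fs t0 D u v \<noteq> \<infinity>"
begin

lemma finite_S: "finite S"
  using finite_ifg_nodes S_nodes by (rule rev_finite_subset)

lemma repair_entry: "t < length fs \<Longrightarrow>
    fst (fs ! t) \<in> servers n s \<and> snd (fs ! t) \<in> {1..s} \<and> snd (fs ! t) \<noteq> fst (fst (fs ! t))"
  using valid unfolding valid_seq_def by (metis nth_mem)

sublocale cut_trace "servers n s" "n div s" "length fs" t0 D "\<lambda>t. fst (fs ! t)" "\<lambda>t. snd (fs ! t)"
  "\<lambda>t x. OutN t x \<notin> S" "\<lambda>t x. InN t x \<notin> S"
proof
  fix t x
  show "x \<in> D \<Longrightarrow> OutN t0 x \<notin> S"
    using finite_crossing[of "OutN t0 x" DC] DC_notin by auto
  show "x \<in> servers n s \<Longrightarrow> \<not> InN 0 x \<notin> S"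
    using finite_crossing[of Src "InN 0 x"] Src_in by auto
  show "t < length fs \<Longrightarrow> x \<in> servers n s \<Longrightarrow> x \<noteq> fst (fs ! t) \<Longrightarrow> InN (Suc t) x \<notin> S \<Longrightarrow> OutN t x \<notin> S"
    using finite_crossing[of "OutN t x" "InN (Suc t) x"] by auto
qed (use finite_servers repair_entry card_cluster collector_servers t0_le_length in auto)

text \<open>Each event owns a distinct sink-side node whose inflow from S is its cost: the in-node
  of a repaired event, the out-node of any other event.\<close>
lemma event_costs_le_cut_value:
  "ereal (\<Sum>e\<in>events. event_cost a b e) \<le> cut_value (ifg_cap n s a b fs t0 D) (ifg_nodes n s fs) S"
proof -
  let ?c = "ifg_cap n s a b fs t0 D" and ?V = "ifg_nodes n s fs"
  define node where
    "node e = (if InN (fst e) (snd e) \<notin> S then InN (fst e) (snd e) else OutN (fst e) (snd e))" for e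
  have "inj_on node events" by (auto intro!: inj_onI simp: node_def split: if_splits)
  moreover have node_V_S: "node ` events \<subseteq> ?V - S"
    by (auto simp: node_def events_def event_def)
  moreover have "(\<Sum>u\<in>S. ?c u (node e)) = ereal (event_cost a b e)" if "e \<in> events" for e
  proof -
    obtain t x where "e = (t, x)" by (cases e)
    then have e: "e = (t, x)" "event t x" using that by (auto simp: events_def)
    then have "t \<le> length fs" "x \<in> servers n s" by (auto simp: event_def)
    show ?thesis
    proof (cases "InN t x \<in> S")
      case False
      then obtain t' where t': "t = Suc t'" "x = fst (fs ! t')" using e
        by (auto simp: event_def gr0_conv_Suc)
      then show ?thesis
        using inflow_repaired[OF finite_S, of t'] e False \<open>t \<le> length fs\<close> \<open>x \<in> servers n s\<close>
        by (simp add: node_def event_cost_def)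
    qed (use e \<open>t \<le> length fs\<close> \<open>x \<in> servers n s\<close> in
          \<open>simp add: node_def event_cost_def inflow_OutN finite_S\<close>)
  qed
  ultimately have "ereal (\<Sum>e\<in>events. event_cost a b e) = (\<Sum>v\<in>node ` events. \<Sum>u\<in>S. ?c u v)"
    by (simp add: sum.reindex)
  also have "\<dots> \<le> (\<Sum>v\<in>?V - S. \<Sum>u\<in>S. ?c u v)"
    using node_V_S finite_ifg_nodes ifg_cap_nonneg[OF a_pos b_pos]
    by (intro sum_mono2) (auto intro: sum_nonneg)
  finally show ?thesis by (simp add: cut_value_eq_sum_inflow)
qed

end

theorem cut_value_ge_split_value:
  assumes "0 < a" "0 < b" "valid_seq n s fs" "t0 \<le> length fs" "D \<subseteq> servers n s"
    and "S \<subseteq> ifg_nodes n s fs" "Src \<in> S" "DC \<notin> S"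
  shows "\<exists>p q H. admissible_split (card D) p q H
           \<and> ereal (split_value a b (n div s) p q H)
               \<le> cut_value (ifg_cap n s a b fs t0 D) (ifg_nodes n s fs) S"
proof (cases "\<exists>u\<in>S. \<exists>v\<in>ifg_nodes n s fs - S. ifg_cap n s a b fs t0 D u v = \<infinity>")
  case True
  have "finite S" using finite_ifg_nodes assms(6) by (rule rev_finite_subset)
  then have "cut_value (ifg_cap n s a b fs t0 D) (ifg_nodes n s fs) S = \<infinity>"
    unfolding cut_value_def using True finite_ifg_nodes ifg_cap_nonneg[OF assms(1,2)]
    by (subst sum_Pinfty) auto
  then show ?thesis by (auto simp: admissible_split_def intro: exI[of _ "card D"] exI[of _ 0])
next
  case False
  then interpret finite_cut n s a b fs t0 D S using assms by unfold_locales auto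
  show ?thesis
    using exists_admissible_split_le_event_costs[OF a_pos b_pos] event_costs_le_cut_value
    by (meson ereal_less_eq(3) order_trans)
qed

lemma min_cut_ge:
  assumes "0 < a" "0 < b" "valid_seq n s fs" "t0 \<le> length fs" "D \<subseteq> servers n s"
    and "\<And>p q H. admissible_split (card D) p q H \<Longrightarrow> v \<le> split_value a b (n div s) p q H"
  shows "ereal v \<le> min_cut n s a b fs t0 D"
  unfolding min_cut_def
proof (rule INF_greatest, clarify)
  fix S assume "S \<subseteq> ifg_nodes n s fs" "Src \<in> S" "DC \<notin> S"
  then show "ereal v \<le> cut_value (ifg_cap n s a b fs t0 D) (ifg_nodes n s fs) S"
    using cut_value_ge_split_value[OF assms(1-5)] assms(6) by (meson ereal_less_eq(3) order_trans)
qed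

lemma Fstar_ge:
  assumes "0 < a" "0 < b"
    and "\<And>p q H. admissible_split k p q H \<Longrightarrow> v \<le> split_value a b (n div s) p q H"
  shows "ereal v \<le> Fstar n k s a b"
  unfolding Fstar_def by (rule INF_greatest) (auto intro!: min_cut_ge assms)

section \<open>An optimal failure pattern\<close>

text \<open>Servers (1,1), ..., (1,p) are repaired from cluster 2, then (2,1), ..., (2,q) from
  cluster 1, and the collector reads them all at the end; the sink side holds each of them from its
  repair on. A first-cluster server pays either its storage edge (\<open>store_cut\<close>) or its d helper
  edges, a second-cluster server the d - p helpers of cluster 1 that were not repaired.\<close>
locale two_cluster_repair =
  fixes n s p q :: nat and store_cut :: bool and a b :: real
  assumes two_le_s: "2 \<le> s" and p_le: "p \<le> n div s" and q_le: "q \<le> n div s"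
    and a_pos: "0 < a" and b_pos: "0 < b"
begin

definition repair_seq :: "((nat \<times> nat) \<times> nat) list" where
  "repair_seq = map (\<lambda>t. if t < p then ((1, t + 1), 2) else ((2, t + 1 - p), 1)) [0..<p + q]"

definition collector :: "(nat \<times> nat) set" where
  "collector = Pair 1 ` {1..p} \<union> Pair 2 ` {1..q}"

definition repair_time :: "nat \<times> nat \<Rightarrow> nat" where
  "repair_time x = (if fst x = 1 then snd x else p + snd x)"

definition out_sink :: "nat \<Rightarrow> nat \<times> nat \<Rightarrow> bool" where
  "out_sink t x \<longleftrightarrow> x \<in> collector \<and> repair_time x \<le> t \<and> t \<le> p + q"

definition in_sink :: "nat \<Rightarrow> nat \<times> nat \<Rightarrow> bool" where
  "in_sink t x \<longleftrightarrow> out_sink t x \<and> (repair_time x < t \<or> fst x = 2 \<or> \<not> store_cut)"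

definition sink_side :: "node set" where
  "sink_side = {DC} \<union> {OutN t x | t x. out_sink t x} \<union> {InN t x | t x. in_sink t x}"

abbreviation all_nodes :: "node set" where
  "all_nodes \<equiv> ifg_nodes n s repair_seq"

definition source_side :: "node set" where
  "source_side = all_nodes - sink_side"

abbreviation cap :: "node \<Rightarrow> node \<Rightarrow> ereal" where
  "cap \<equiv> ifg_cap n s a b repair_seq (p + q) collector"

definition inflow :: "node \<Rightarrow> ereal" where
  "inflow v = (\<Sum>u\<in>source_side. cap u v)"

definition first_cut_node :: "nat \<Rightarrow> node" where
  "first_cut_node j = (if store_cut then OutN j (1, j) else InN j (1, j))"

definition second_cut_node :: "nat \<Rightarrow> node" where
  "second_cut_node j = InN (p + j) (2, j)"

definition cost1 :: real where
  "cost1 = (if store_cut then a else b * real (n div s))"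

definition cost2 :: real where
  "cost2 = b * (real (n div s) - real p)"

lemma length_repair_seq: "length repair_seq = p + q"
  by (simp add: repair_seq_def)

lemma nth_repair_seq:
  "t < p + q \<Longrightarrow> repair_seq ! t = (if t < p then ((1, t + 1), 2) else ((2, t + 1 - p), 1))"
  by (simp add: repair_seq_def)

lemma collector_servers: "collector \<subseteq> servers n s"
  using two_le_s p_le q_le by (auto simp: collector_def servers_def)

lemma card_collector: "card collector = p + q"
  unfolding collector_def by (subst card_Un_disjoint) (auto simp: card_image inj_on_def)

lemma failed_repair_seq_eq:
  "t < p + q \<Longrightarrow> x \<in> collector \<Longrightarrow> fst (repair_seq ! t) = x \<longleftrightarrow> repair_time x = Suc t"
  by (auto simp: collector_def nth_repair_seq repair_time_def)

lemma failed_repair_seq: "t < p + q \<Longrightarrow> fst (repair_seq ! t) \<in> collector"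
  by (force simp: nth_repair_seq collector_def)

lemma valid_repair_seq: "valid_seq n s repair_seq"
  unfolding valid_seq_def
proof
  fix e assume "e \<in> set repair_seq"
  then obtain t where "t < p + q" "e = repair_seq ! t"
    by (auto simp: in_set_conv_nth length_repair_seq)
  moreover from this have "fst e \<in> servers n s"
    using failed_repair_seq collector_servers by auto
  ultimately show "fst e \<in> servers n s \<and> snd e \<in> {1..s} \<and> snd e \<noteq> fst (fst e)"
    using two_le_s by (auto simp: nth_repair_seq)
qed

lemma sink_side_nodes: "sink_side \<subseteq> all_nodes"
  using collector_servers
  by (auto simp: sink_side_def in_sink_def out_sink_def length_repair_seq)

lemma OutN_source_side:
  "t \<le> p + q \<Longrightarrow> x \<in> servers n s \<Longrightarrow> OutN t x \<in> source_side \<longleftrightarrow> \<not> out_sink t x"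
  by (cases x) (auto simp: source_side_def sink_side_def length_repair_seq)

lemma InN_source_side:
  "t \<le> p + q \<Longrightarrow> x \<in> servers n s \<Longrightarrow> InN t x \<in> source_side \<longleftrightarrow> \<not> in_sink t x"
  by (cases x) (auto simp: source_side_def sink_side_def length_repair_seq)

lemma finite_source_side: "finite source_side"
  using finite_ifg_nodes by (simp add: source_side_def)

lemma inflow_repaired_node:
  assumes "t < p + q"
  shows "inflow (InN (Suc t) (fst (repair_seq ! t)))
           = ereal (b * real (card
               {z \<in> servers n s. fst z = snd (repair_seq ! t) \<and> \<not> out_sink t z}))"
proof -
  have "fst (repair_seq ! t) \<in> servers n s" using failed_repair_seq assms collector_servers by auto
  then have "inflow (InN (Suc t) (fst (repair_seq ! t)))
      = ereal (b * real (card
          {z \<in> servers n s. fst z = snd (repair_seq ! t) \<and> OutN t z \<in> source_side}))"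
    unfolding inflow_def using assms
      by (intro inflow_repaired finite_source_side) (simp add: length_repair_seq)
  also have "{z \<in> servers n s. fst z = snd (repair_seq ! t) \<and> OutN t z \<in> source_side}
      = {z \<in> servers n s. fst z = snd (repair_seq ! t) \<and> \<not> out_sink t z}"
    using assms OutN_source_side by auto
  finally show ?thesis .
qed

lemma inflow_first_cut_node:
  assumes "j \<in> {1..p}"
  shows "inflow (first_cut_node j) = ereal cost1"
proof (cases store_cut)
  case True
  have "(1, j) \<in> servers n s" using assms collector_servers by (auto simp: collector_def)
  moreover have "\<not> in_sink j (1, j)" using True unfolding in_sink_def repair_time_def by simp
  then have "InN j (1, j) \<in> source_side"
    using assms InN_source_side[OF _ \<open>(1, j) \<in> servers n s\<close>] by simp
  ultimately show ?thesis
    unfolding inflow_def first_cut_node_def cost1_def using True assms finite_source_side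
    by (simp add: inflow_OutN length_repair_seq)
next
  case False
  have "j - 1 < p + q"
    and failed: "fst (repair_seq ! (j - 1)) = (1, j)" "snd (repair_seq ! (j - 1)) = 2"
    using assms by (auto simp: nth_repair_seq)
  \<comment> \<open>before time p no server of cluster 2 has been repaired\<close>
  have "{z \<in> servers n s. fst z = 2 \<and> \<not> out_sink (j - 1) z} = {z \<in> servers n s. fst z = 2}"
    using assms by (auto simp: out_sink_def collector_def repair_time_def)
  then show ?thesis
    unfolding first_cut_node_def cost1_def
    using inflow_repaired_node[OF \<open>j - 1 < p + q\<close>] failed False assms
      card_cluster[of 2 s n] two_le_s
    by simp
qed

lemma inflow_second_cut_node:
  assumes "j \<in> {1..q}"
  shows "inflow (second_cut_node j) = ereal cost2"
proof -
  have "p + j - 1 < p + q"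
    and failed: "fst (repair_seq ! (p + j - 1)) = (2, j)" "snd (repair_seq ! (p + j - 1)) = 1"
    using assms by (auto simp: nth_repair_seq)
  \<comment> \<open>after time p exactly the servers (1,1), ..., (1,p) of cluster 1 are on the sink side\<close>
  have "{z \<in> servers n s. fst z = 1 \<and> \<not> out_sink (p + j - 1) z} = Pair 1 ` {p + 1..n div s}"
    using assms two_le_s p_le
      by (auto simp: out_sink_def collector_def repair_time_def servers_def image_iff)
  then have "card {z \<in> servers n s. fst z = 1 \<and> \<not> out_sink (p + j - 1) z} = n div s - p"
    by (simp add: card_image inj_on_def)
  then show ?thesis
    using inflow_repaired_node[OF \<open>p + j - 1 < p + q\<close>] failed assms p_le
    by (simp add: second_cut_node_def cost2_def of_nat_diff)
qed

lemma inflow_OutN_sink_side: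
  assumes "out_sink t x" "OutN t x \<notin> first_cut_node ` {1..p}"
  shows "inflow (OutN t x) = 0"
proof -
  have x: "x \<in> collector" "x \<in> servers n s" "repair_time x \<le> t" "t \<le> p + q"
    using assms(1) collector_servers by (auto simp: out_sink_def)
  have "in_sink t x"
  proof (rule ccontr)
    assume "\<not> in_sink t x"
    then have "repair_time x = t" "fst x = 1" store_cut
      using assms(1) x(1,3) by (auto simp: in_sink_def collector_def)
    then show False
      using assms(2)[unfolded first_cut_node_def] x(1) by (auto simp: collector_def repair_time_def)
  qed
  then show ?thesis
    using x finite_source_side InN_source_side
    by (simp add: inflow_def inflow_OutN length_repair_seq)
qed

lemma inflow_InN_sink_side:
  assumes "in_sink t x" "InN t x \<notin> first_cut_node ` {1..p}" "InN t x \<notin> second_cut_node ` {1..q}"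
  shows "inflow (InN t x) = 0"
proof -
  have x: "x \<in> collector" "x \<in> servers n s" "repair_time x \<le> t" "t \<le> p + q"
    using assms(1) collector_servers by (auto simp: in_sink_def out_sink_def)
  have "repair_time x \<noteq> t"
  proof
    assume "repair_time x = t"
    then show False
      using assms x(1)
        by (auto simp: in_sink_def collector_def repair_time_def
            first_cut_node_def second_cut_node_def)
  qed
  then obtain t' where t': "t = Suc t'" "repair_time x \<le> t'" using x(3) by (cases t) auto
  then have "x \<noteq> fst (repair_seq ! t')" "OutN t' x \<notin> source_side"
    using x failed_repair_seq_eq[of t' x] OutN_source_side[of t' x] by (auto simp: out_sink_def)
  then have "cap u (InN t x) = 0" if "u \<in> source_side" for u
    using that t' x by (auto simp: ifg_cap_survivor length_repair_seq)
  then show ?thesis by (simp add: inflow_def)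
qed

lemma inflow_DC_zero: "inflow DC = 0"
proof -
  have "OutN (p + q) x \<notin> source_side" if "x \<in> collector" for x
    using that collector_servers
    by (auto simp: OutN_source_side out_sink_def collector_def repair_time_def)
  then show ?thesis by (auto simp: inflow_def ifg_cap_DC intro!: sum.neutral)
qed

lemma cut_nodes_sink_side: "first_cut_node ` {1..p} \<union> second_cut_node ` {1..q} \<subseteq> sink_side"
proof -
  have "OutN t x \<in> sink_side \<longleftrightarrow> out_sink t x" "InN t x \<in> sink_side \<longleftrightarrow> in_sink t x" for t x
    unfolding sink_side_def by blast+
  then show ?thesis
    by (auto simp: first_cut_node_def second_cut_node_def in_sink_def out_sink_def
        collector_def repair_time_def)
qed

lemma cut_value_repair:
  "cut_value cap all_nodes source_side = ereal (real p * cost1 + real q * cost2)"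
proof -
  let ?C = "first_cut_node ` {1..p} \<union> second_cut_node ` {1..q}"
  have "inj_on first_cut_node {1..p}" "inj_on second_cut_node {1..q}"
    by (auto intro!: inj_onI simp: first_cut_node_def second_cut_node_def split: if_splits)
  moreover have "first_cut_node ` {1..p} \<inter> second_cut_node ` {1..q} = {}"
    by (auto simp: first_cut_node_def second_cut_node_def)
  moreover have "all_nodes - source_side = sink_side"
    using sink_side_nodes by (auto simp: source_side_def)
  moreover have "inflow v = 0" if "v \<in> sink_side - ?C" for v
    using that inflow_DC_zero inflow_OutN_sink_side inflow_InN_sink_side
      by (auto simp: sink_side_def)
  then have "(\<Sum>v\<in>sink_side. inflow v) = (\<Sum>v\<in>?C. inflow v)"
    using finite_subset[OF sink_side_nodes finite_ifg_nodes] cut_nodes_sink_side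
    by (intro sum.mono_neutral_right) auto
  ultimately show ?thesis
    using inflow_first_cut_node inflow_second_cut_node
    by (simp add: cut_value_eq_sum_inflow inflow_def[symmetric] sum.union_disjoint sum.reindex)
qed

theorem Fstar_le_repair: "Fstar n (p + q) s a b \<le> ereal (real p * cost1 + real q * cost2)"
proof -
  have "Fstar n (p + q) s a b \<le> min_cut n s a b repair_seq (p + q) collector"
    unfolding Fstar_def
    using valid_repair_seq length_repair_seq collector_servers card_collector
    by (intro INF_lower2[of "(repair_seq, p + q, collector)"]) auto
  also have "\<dots> \<le> cut_value cap all_nodes source_side"
    unfolding min_cut_def by (rule INF_lower) (auto simp: source_side_def sink_side_def)
  finally show ?thesis using cut_value_repair by simp
qed

end

section \<open>Minimising the bound\<close>

definition profile_value :: "real \<Rightarrow> real \<Rightarrow> nat \<Rightarrow> nat \<Rightarrow> nat \<Rightarrow> real" where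
  "profile_value \<alpha> \<beta> d k j = real j * \<alpha> + (real d - real j) * (real k - real j) * \<beta>"

lemma profile_value_le:
  assumes below: "\<And>j. j < k1 \<Longrightarrow> \<alpha> \<le> \<beta> * (real d + real k - real j - real k1)"
    and above: "\<And>j. k1 < j \<Longrightarrow> j \<le> k \<Longrightarrow> \<beta> * (real d + real k - real j - real k1) \<le> \<alpha>"
    and "j \<le> k"
  shows "profile_value \<alpha> \<beta> d k k1 \<le> profile_value \<alpha> \<beta> d k j"
proof -
  have "profile_value \<alpha> \<beta> d k j - profile_value \<alpha> \<beta> d k k1
      = (real j - real k1) * (\<alpha> - \<beta> * (real d + real k - real j - real k1))"
    unfolding profile_value_def by algebra
  moreover have "0 \<le> (real j - real k1) * (\<alpha> - \<beta> * (real d + real k - real j - real k1))"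
  proof (cases "j < k1")
    case False
    then show ?thesis using above[of j] \<open>j \<le> k\<close>
      by (cases "j = k1") (auto intro!: mult_nonneg_nonneg)
  qed (use below in \<open>auto intro!: mult_nonpos_nonpos\<close>)
  ultimately show ?thesis by linarith
qed

lemma split_value_ge_profile_value_first:
  assumes "0 < \<beta>" "p + q = k" "H \<le> p * q"
  shows "profile_value \<alpha> \<beta> d k p \<le> split_value \<alpha> \<beta> d p q H"
proof -
  have "real H \<le> real p * real q" using assms(3) by (metis of_nat_le_iff of_nat_mult)
  then have "\<beta> * real H \<le> \<beta> * (real p * real q)" using assms(1) by simp
  moreover have "real k - real p = real q" using assms(2) by auto
  ultimately show ?thesis unfolding profile_value_def split_value_def by (simp add: algebra_simps)
qed

lemma split_value_ge_profile_value_half: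
  assumes "0 < \<beta>" "p + q = k" "p < q" "H \<le> (k div 2) * ((k + 1) div 2)" "\<alpha> \<le> real d * \<beta>"
  shows "profile_value \<alpha> \<beta> d k ((k + 1) div 2) \<le> split_value \<alpha> \<beta> d p q H"
proof -
  define hf where "hf = k div 2"
  define hc where "hc = (k + 1) div 2"
  have "hf + hc = k" "p \<le> hc" using assms(2,3) unfolding hf_def hc_def by presburger+
  have "real H \<le> real hf * real hc" using assms(4) unfolding hf_def hc_def
    by (metis of_nat_le_iff of_nat_mult)
  then have "\<beta> * real H \<le> \<beta> * (real hf * real hc)" using assms(1) by simp
  moreover have "(real hc - real p) * \<alpha> \<le> (real hc - real p) * (real d * \<beta>)"
    using \<open>p \<le> hc\<close> assms(5) by (intro mult_left_mono) auto
  moreover have "real k = real hf + real hc" using \<open>hf + hc = k\<close> by simp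
  moreover have "real q * (real d * \<beta>) = (real hf + real hc - real p) * (real d * \<beta>)"
    using \<open>hf + hc = k\<close> assms(2) by simp
  ultimately show ?thesis unfolding profile_value_def split_value_def hc_def[symmetric]
    by (simp add: algebra_simps)
qed

lemma div4_eq_floor_mult_ceiling: "(k::nat) * k div 4 = (k div 2) * ((k + 1) div 2)"
proof -
  consider m where "k = 2 * m" | m where "k = 2 * m + 1" by (metis oddE evenE)
  then show ?thesis
  proof cases
    case (1 m)
    then have "k * k = (m * m) * 4" by (simp add: algebra_simps)
    then show ?thesis using 1 by simp
  next
    case (2 m)
    then have "k * k = 1 + (m * m + m) * 4" by (simp add: algebra_simps)
    then show ?thesis using 2 by (simp add: algebra_simps)
  qed
qed

lemma split_value_ge_profile_value:
  assumes "0 < \<beta>" "admissible_split k p q H" "\<alpha> \<le> real d * \<beta>"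
    and "(k + 1) div 2 \<le> k1"
    and minimal: "\<And>j. j \<le> k \<Longrightarrow> profile_value \<alpha> \<beta> d k k1 \<le> profile_value \<alpha> \<beta> d k j"
  shows "profile_value \<alpha> \<beta> d k k1 \<le> split_value \<alpha> \<beta> d p q H"
proof (cases "q \<le> p")
  case True
  then show ?thesis
    using assms(1,2) minimal[of p] split_value_ge_profile_value_first[of \<beta> p q k H \<alpha> d]
    unfolding admissible_split_def by force
next
  case False
  have "H \<le> (k div 2) * ((k + 1) div 2)"
    using assms(2) div4_eq_floor_mult_ceiling[of k] unfolding admissible_split_def by linarith
  then show ?thesis using assms(1-3) False minimal[of "(k + 1) div 2"]
      split_value_ge_profile_value_half[of \<beta> p q k H \<alpha> d]
    unfolding admissible_split_def by fastforce
qed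

lemma split_value_ge_high_storage:
  assumes "0 < \<beta>" "admissible_split k p q H" "real d * \<beta> \<le> \<alpha>"
  shows "real k * real d * \<beta> - real (k div 2) * real ((k + 1) div 2) * \<beta> \<le> split_value \<alpha> \<beta> d p q H"
proof -
  have "H \<le> (k div 2) * ((k + 1) div 2)" "p + q = k"
    using assms(2) div4_eq_floor_mult_ceiling[of k] unfolding admissible_split_def by linarith+
  then have "real H \<le> real (k div 2) * real ((k + 1) div 2)" by (metis of_nat_le_iff of_nat_mult)
  then have "\<beta> * real H \<le> \<beta> * (real (k div 2) * real ((k + 1) div 2))" using assms(1) by simp
  moreover have "real p * (real d * \<beta>) \<le> real p * \<alpha>" using assms(3) by (intro mult_left_mono) auto
  moreover have "real k = real p + real q" using \<open>p + q = k\<close> by simp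
  ultimately show ?thesis unfolding split_value_def by (simp add: algebra_simps)
qed

lemma profile_value_minimal_interval:
  assumes "0 < \<beta>" "(real d + real k - 2 * real k1 - 1) * \<beta> \<le> \<alpha>"
    and "\<alpha> < (real d + real k - 2 * real k1 + 1) * \<beta>" "j \<le> k"
  shows "profile_value \<alpha> \<beta> d k k1 \<le> profile_value \<alpha> \<beta> d k j"
proof (rule profile_value_le)
  fix i assume "i < k1"
  then have "(real d + real k - 2 * real k1 + 1) * \<beta> \<le> (real d + real k - real i - real k1) * \<beta>"
    using assms(1) by (intro mult_right_mono) auto
  then show "\<alpha> \<le> \<beta> * (real d + real k - real i - real k1)" using assms(3)
    by (simp add: algebra_simps)
next
  fix i assume "k1 < i"
  then have "(real d + real k - real i - real k1) * \<beta> \<le> (real d + real k - 2 * real k1 - 1) * \<beta>"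
    using assms(1) by (intro mult_right_mono) auto
  then show "\<beta> * (real d + real k - real i - real k1) \<le> \<alpha>" using assms(2)
    by (simp add: algebra_simps)
qed (rule assms(4))

lemma profile_value_minimal_low_storage:
  assumes "0 < \<beta>" "\<alpha> < (real d - real k - 1) * \<beta>" "j \<le> k"
  shows "profile_value \<alpha> \<beta> d k k \<le> profile_value \<alpha> \<beta> d k j"
proof (rule profile_value_le)
  fix i assume "i < k"
  then have "(real d - real k - 1) * \<beta> \<le> (real d + real k - real i - real k) * \<beta>"
    using assms(1) by (intro mult_right_mono) auto
  then show "\<alpha> \<le> \<beta> * (real d + real k - real i - real k)" using assms(2)
    by (simp add: algebra_simps)
qed (use assms(3) in auto)

theorem Fstar_high_storage:
  assumes "0 < \<alpha>" "0 < \<beta>" "2 \<le> s" "k \<le> n div s" "real (n div s) * \<beta> \<le> \<alpha>"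
  shows "Fstar n k s \<alpha> \<beta>
           = ereal (real k * real (n div s) * \<beta> - real (k div 2) * real ((k + 1) div 2) * \<beta>)"
proof (rule antisym)
  have halves: "k div 2 + (k + 1) div 2 = k" by presburger
  interpret two_cluster_repair n s "k div 2" "(k + 1) div 2" False \<alpha> \<beta>
    using assms halves by unfold_locales auto
  have "Fstar n k s \<alpha> \<beta> \<le> ereal (real (k div 2) * cost1 + real ((k + 1) div 2) * cost2)"
    using Fstar_le_repair unfolding halves .
  moreover have "real k = real (k div 2) + real ((k + 1) div 2)" using halves by simp
  ultimately show "Fstar n k s \<alpha> \<beta>
      \<le> ereal (real k * real (n div s) * \<beta> - real (k div 2) * real ((k + 1) div 2) * \<beta>)"
    by (simp add: cost1_def cost2_def algebra_simps)
  show "ereal (real k * real (n div s) * \<beta> - real (k div 2) * real ((k + 1) div 2) * \<beta>)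
      \<le> Fstar n k s \<alpha> \<beta>"
    using assms by (intro Fstar_ge split_value_ge_high_storage) auto
qed

theorem Fstar_eq_profile_value:
  assumes "0 < \<alpha>" "0 < \<beta>" "2 \<le> s" "k \<le> n div s" "\<alpha> \<le> real (n div s) * \<beta>"
    and "(k + 1) div 2 \<le> k1" "k1 \<le> k"
    and "\<And>j. j \<le> k \<Longrightarrow> profile_value \<alpha> \<beta> (n div s) k k1 \<le> profile_value \<alpha> \<beta> (n div s) k j"
  shows "Fstar n k s \<alpha> \<beta> = ereal (profile_value \<alpha> \<beta> (n div s) k k1)"
proof (rule antisym)
  interpret two_cluster_repair n s k1 "k - k1" True \<alpha> \<beta>
    using assms by unfold_locales auto
  show "Fstar n k s \<alpha> \<beta> \<le> ereal (profile_value \<alpha> \<beta> (n div s) k k1)"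
    using Fstar_le_repair assms(7)
    by (simp add: cost1_def cost2_def profile_value_def of_nat_diff algebra_simps)
  show "ereal (profile_value \<alpha> \<beta> (n div s) k k1) \<le> Fstar n k s \<alpha> \<beta>"
    using assms by (intro Fstar_ge split_value_ge_profile_value) auto
qed

lemma floor_half: "\<lfloor>real k / 2\<rfloor> = int (k div 2)"
  using floor_divide_of_nat_eq[of k 2] by simp

lemma ceiling_half: "\<lceil>real k / 2\<rceil> = int ((k + 1) div 2)"
proof (rule ceiling_unique)
  have "k \<le> 2 * ((k + 1) div 2)" "2 * ((k + 1) div 2) < k + 2" by presburger+
  then show "real k / 2 \<le> real_of_int (int ((k + 1) div 2))"
    and "real_of_int (int ((k + 1) div 2)) - 1 < real k / 2" by linarith+
qed

theorem lemma3:
  fixes n k s d :: nat and \<alpha> \<beta> :: real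
  assumes "n > 0" "k > 0" "2 \<le> s" "s \<le> n div k"
    and "d = n div s"
    and "\<alpha> > 0" "\<beta> > 0"
  shows "(real d \<le> \<alpha> / \<beta> \<longrightarrow>
            Fstar n k s \<alpha> \<beta> = ereal (real k * real d * \<beta>
               - of_int \<lfloor>real k / 2\<rfloor> * of_int \<lceil>real k / 2\<rceil> * \<beta>))
       \<and> (\<forall>k1 \<in> {nat \<lceil>real k / 2\<rceil>..k}.
            real d + real k - 2 * real k1 - 1 \<le> \<alpha> / \<beta>
            \<and> \<alpha> / \<beta> < min (real d + real k - 2 * real k1 + 1) (real d) \<longrightarrow>
            Fstar n k s \<alpha> \<beta> = ereal (real k1 * \<alpha> + (real d - real k1) * (real k - real k1) * \<beta>))
       \<and> (\<alpha> / \<beta> < real d - real k - 1 \<longrightarrow> Fstar n k s \<alpha> \<beta> = ereal (real k * \<alpha>))"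
proof (intro conjI ballI impI)
  have "s * k \<le> n" using assms(2,4) by (simp add: less_eq_div_iff_mult_less_eq)
  then have k_le_d: "k \<le> n div s" using assms(3)
    by (simp add: less_eq_div_iff_mult_less_eq mult.commute)
  note quotient_iffs = pos_le_divide_eq[OF assms(7)] pos_divide_less_eq[OF assms(7)]
  show "Fstar n k s \<alpha> \<beta>
      = ereal (real k * real d * \<beta> - of_int \<lfloor>real k / 2\<rfloor> * of_int \<lceil>real k / 2\<rceil> * \<beta>)"
    if "real d \<le> \<alpha> / \<beta>"
    using Fstar_high_storage[OF assms(6,7,3) k_le_d] that assms(5)
    by (simp add: quotient_iffs floor_half ceiling_half)
  show "Fstar n k s \<alpha> \<beta> = ereal (real k1 * \<alpha> + (real d - real k1) * (real k - real k1) * \<beta>)"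
    if "k1 \<in> {nat \<lceil>real k / 2\<rceil>..k}" and "real d + real k - 2 * real k1 - 1 \<le> \<alpha> / \<beta>
      \<and> \<alpha> / \<beta> < min (real d + real k - 2 * real k1 + 1) (real d)" for k1
    using Fstar_eq_profile_value[OF assms(6,7,3) k_le_d, of k1]
      profile_value_minimal_interval[OF assms(7), of d k k1 \<alpha>] that assms(5)
    by (simp add: quotient_iffs ceiling_half profile_value_def)
  show "Fstar n k s \<alpha> \<beta> = ereal (real k * \<alpha>)" if "\<alpha> / \<beta> < real d - real k - 1"
  proof -
    have "\<alpha> < (real d - real k - 1) * \<beta>" using that by (simp add: quotient_iffs)
    moreover have "(real d - real k - 1) * \<beta> \<le> real d * \<beta>" using assms(7) by simp
    ultimately show ?thesis
      using Fstar_eq_profile_value[OF assms(6,7,3) k_le_d, of k]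
        profile_value_minimal_low_storage[OF assms(7), of \<alpha> d k] assms(5)
      by (simp add: profile_value_def)
  qed
qed

end
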